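(* Let $\mathcal{A}$ be a set of $N$ arms, $N\ge B\ge 1$, $\epsilon>0$, and let $S_t$ denote the set of arms chosen in round $t$ by $\mathbf{FPML}(B,\epsilon)$ in the full feedback setting. Then \[\max_{c_1,\dots,c_T}\mathbb{E}\left[(1-\epsilon^B)\sum_{t=1}^T c_t(S_t)-\min_{a^*\in\mathcal{A}}\sum_{t=1}^T c_t(a^* )\right]\le\frac{1+\ln(N)}{\epsilon}.\] In particular, for $\epsilon=((\ln(N)+1)/T)^{1/(B+1)}$, \[R_T^*(\mathbf{FPML})\le 2T^{\frac{1}{B+1}}(1+\ln(N))^{\frac{B}{B+1}}.\]
   Context: Setting: in each round $t=1,\dots,T$ an oblivious adversary fixes $c_t:\mathcal{A}\to[0,1]$ (the maximum above is over all such sequences); the algorithm picks $S_t\subset\mathcal{A}$ with $|S_t|=B$ and incurs cost $c_t(S_t):=\min_{a\in S_t}c_t(a)$; afterwards $c_t$ is revealed (full feedback). $R_T^*(\mathbf{ALG}):=\max_{c_1,\dots,c_T}\mathbb{E}\left[\sum_{t=1}^T c_t(S_t)-\min_{a^*\in\mathcal{A}}\sum_{t=1}^T c_t(a^* )\right]$. Algorithm $\mathbf{FPML}(B,\epsilon)$ (Follow the Perturbed Multiple Leaders): set $C_0(a)=0$ for all $a$. In round $t$: for each arm $a$ draw independently $p_t(a)$ from the exponential distribution with rate $\epsilon$ (mean $1/\epsilon$); compute $\tilde C_{t-1}(a)=C_{t-1}(a)-p_t(a)$; pull the $B$ arms with the lowest values of $\tilde C_{t-1}$ (ties broken arbitrarily);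 then update $C_t(a)=C_{t-1}(a)+c_t(a)$. *)

theory Defs
  imports "HOL-Probability.Probability"
begin

text \<open>Probability space of all perturbations: the values p_t(a) for rounds
t in {0..<T} (round t+1 of the paper is index t) and arms a in A, i.i.d.
exponential with rate eps. The completion is taken so that the algorithm's
cost is measurable for every tie-breaking rule (ties have probability zero).\<close>
definition fpml_space :: "real \<Rightarrow> nat \<Rightarrow> 'a set \<Rightarrow> ((nat \<times> 'a) \<Rightarrow> real) measure" where
  "fpml_space eps T A =
     completion (PiM ({..<T} \<times> A) (\<lambda>_. density lborel (exponential_density eps)))"

definition valid_tiebreak :: "'a set \<Rightarrow> nat \<Rightarrow> (nat \<Rightarrow> ('a \<Rightarrow> real) \<Rightarrow> 'a set) \<Rightarrow> bool" where
  "valid_tiebreak A B sel \<longleftrightarrow>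
     (\<forall>t v. sel t v \<subseteq> A \<and> card (sel t v) = B \<and>
            (\<forall>a\<in>sel t v. \<forall>b\<in>A - sel t v. v a \<le> v b))"

definition cum_cost :: "(nat \<Rightarrow> 'a \<Rightarrow> real) \<Rightarrow> nat \<Rightarrow> 'a \<Rightarrow> real" where
  "cum_cost c t a = (\<Sum>s<t. c s a)"

definition fpml_set :: "(nat \<Rightarrow> ('a \<Rightarrow> real) \<Rightarrow> 'a set) \<Rightarrow> (nat \<Rightarrow> 'a \<Rightarrow> real)
     \<Rightarrow> ((nat \<times> 'a) \<Rightarrow> real) \<Rightarrow> nat \<Rightarrow> 'a set" where
  "fpml_set sel c \<omega> t = sel t (\<lambda>a. cum_cost c t a - \<omega> (t, a))"

definition fpml_cost :: "(nat \<Rightarrow> ('a \<Rightarrow> real) \<Rightarrow> 'a set) \<Rightarrow> (nat \<Rightarrow> 'a \<Rightarrow> real)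
     \<Rightarrow> nat \<Rightarrow> ((nat \<times> 'a) \<Rightarrow> real) \<Rightarrow> real" where
  "fpml_cost sel c T \<omega> = (\<Sum>t<T. Min (c t ` fpml_set sel c \<omega> t))"

definition best_arm_cost :: "'a set \<Rightarrow> (nat \<Rightarrow> 'a \<Rightarrow> real) \<Rightarrow> nat \<Rightarrow> real" where
  "best_arm_cost A c T = Min ((\<lambda>a. \<Sum>t<T. c t a) ` A)"

definition valid_costs :: "'a set \<Rightarrow> (nat \<Rightarrow> 'a \<Rightarrow> real) \<Rightarrow> bool" where
  "valid_costs A c \<longleftrightarrow> (\<forall>t. \<forall>a\<in>A. 0 \<le> c t a \<and> c t a \<le> 1)"

end

(*
  Each round of FPML uses a fresh perturbation, so its expected cost is a sum over rounds of
  expectations with respect to a single vector p of independent Exp(eps) perturbations. Ties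
  among the perturbed cumulative costs C_t - p have probability zero, and then FPML pays the
  smallest cost among the B lowest arms of C_t - p. Compare this with the learner that in
  round t plays the strict leader of C_(t+1) - p, i.e. that already knows c_t: by the
  be-the-leader argument its total cost is at most that of the best arm plus max_a p a, whose
  expectation is at most (1 + ln N) / eps. If in some round the B lowest arms S of C_t - p do
  not contain that leader, then, as costs lie in [0,1], every arm of S is within distance 1 of
  its tie threshold with the best arm outside S. Conditionally on the perturbations outside S,
  memorylessness of the exponential distribution makes this at most eps^B times as likely as
  S being lowest. Hence (1 - eps^B) times the expected cost of FPML is at most the expected
  cost of the leader, which is the first claim; the second adds eps^B T and balances the two
  terms by the choice of eps.
*)

theory Submission
  imports Defs
begin

lemma (in finite_measure) integral_sum_if:
  assumes "finite I" "\<And>i. i \<in> I \<Longrightarrow> Measurable.pred M (P i)"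
  shows "integrable M (\<lambda>x. \<Sum>i\<in>I. if P i x then k i else 0 :: real)"
    and "(\<integral>x. (\<Sum>i\<in>I. if P i x then k i else 0) \<partial>M) = (\<Sum>i\<in>I. k i * measure M {x \<in> space M. P i x})"
proof -
  have eq: "(\<Sum>i\<in>I. if P i x then k i else 0) = (\<Sum>i\<in>I. k i * indicator {x \<in> space M. P i x} x)"
    if "x \<in> space M" for x
    using that by (auto simp: indicator_def intro!: sum.cong)
  have "integrable M (\<lambda>x. \<Sum>i\<in>I. k i * indicator {x \<in> space M. P i x} x)"
    using assms unfolding pred_def
    by (intro Bochner_Integration.integrable_sum integrable_mult_right integrable_real_indicator)
      (auto simp: less_top[symmetric])
  then show "integrable M (\<lambda>x. \<Sum>i\<in>I. if P i x then k i else 0)"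
    by (subst Bochner_Integration.integrable_cong[OF refl eq])
  have "(\<integral>x. (\<Sum>i\<in>I. if P i x then k i else 0) \<partial>M)
      = (\<integral>x. (\<Sum>i\<in>I. k i * indicator {x \<in> space M. P i x} x) \<partial>M)"
    by (rule Bochner_Integration.integral_cong[OF refl eq])
  also have "\<dots> = (\<Sum>i\<in>I. k i * measure M {x \<in> space M. P i x})"
    using assms unfolding pred_def
    by (subst Bochner_Integration.integral_sum) (auto simp: Int_absorb2 less_top[symmetric])
  finally show "(\<integral>x. (\<Sum>i\<in>I. if P i x then k i else 0) \<partial>M)
      = (\<Sum>i\<in>I. k i * measure M {x \<in> space M. P i x})" .
qed

lemma borel_measurable_completion_AE_eq:
  fixes f g :: "'a \<Rightarrow> 'b::topological_space"
  assumes g: "g \<in> borel_measurable M" and eq: "AE x in M. f x = g x"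
  shows "f \<in> borel_measurable (completion M)"
proof (rule borel_measurableI)
  fix S :: "'b set" assume "open S"
  then have g_S: "g -` S \<inter> space (completion M) \<in> sets (completion M)"
    by (rule measurable_sets[OF measurable_completion[OF g] borel_open])
  have "AE x in completion M. x \<in> g -` S \<inter> space (completion M) \<longleftrightarrow> x \<in> f -` S \<inter> space (completion M)"
    using AE_completion[OF eq] by eventually_elim simp
  then show "f -` S \<inter> space (completion M) \<in> sets (completion M)"
    by (rule completion.in_sets_AE[OF _ g_S]) blast
qed

lemma integral_completion_AE_eq:
  fixes f g :: "'a \<Rightarrow> real"
  assumes g: "integrable M g" and eq: "AE x in M. f x = g x"
  shows "integrable (completion M) f" and "(\<integral>x. f x \<partial>completion M) = (\<integral>x. g x \<partial>M)"
proof -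
  have g_meas: "g \<in> borel_measurable M"
    using g by (rule borel_measurable_integrable)
  have f_meas: "f \<in> borel_measurable (completion M)"
    using g_meas eq by (rule borel_measurable_completion_AE_eq)
  have eq': "AE x in completion M. f x = g x"
    using eq by (rule AE_completion)
  show "integrable (completion M) f"
    using integrable_cong_AE[OF f_meas measurable_completion[OF g_meas] eq'] g
      integrable_completion[OF g_meas] by simp
  show "(\<integral>x. f x \<partial>completion M) = (\<integral>x. g x \<partial>M)"
    using integral_cong_AE[OF f_meas measurable_completion[OF g_meas] eq']
      integral_completion[OF g_meas] by simp
qed

section \<open>The exponential distribution\<close>

abbreviation exp_measure :: "real \<Rightarrow> real measure" where
  "exp_measure e \<equiv> density lborel (exponential_density e)"

lemma distributed_exp_measure:
  "0 < e \<Longrightarrow> distributed (exp_measure e) lborel (\<lambda>x. x) (exponential_density e)"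
  unfolding distributed_def
  by (auto simp: exponential_density_nonneg distr_id2 intro!: density_cong)

lemma measure_exp_measure_greaterThan:
  assumes e: "0 < e"
  shows "measure (exp_measure e) {t<..} = exp (- e * max t 0)"
proof -
  interpret prob_space "exp_measure e"
    using e by (rule prob_space_exponential_density)
  have gt: "measure (exp_measure e) {s<..} = exp (- s * e)" if "0 \<le> s" for s
    using exponential_distributedD_gt[OF distributed_exp_measure[OF e] that e]
    by (simp add: greaterThan_def)
  show ?thesis
  proof (cases "0 \<le> t")
    case True
    then show ?thesis using gt[OF True] by (simp add: mult.commute)
  next
    case False
    have "1 = measure (exp_measure e) {0<..}" using gt[of 0] by simp
    also have "\<dots> \<le> measure (exp_measure e) {t<..}"
      using False by (intro finite_measure_mono) auto
    finally show ?thesis using False prob_le_1 by (simp add: antisym)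
  qed
qed

lemma measure_exp_measure_atLeast:
  assumes e: "0 < e"
  shows "measure (exp_measure e) {t..} = exp (- e * max t 0)"
proof -
  have "{t} \<in> null_sets (exp_measure e)"
    by (simp add: null_sets_def emeasure_density)
  then have "measure (exp_measure e) ({t<..} \<union> {t}) = measure (exp_measure e) {t<..}"
    by (intro measure_Un_null_set) auto
  moreover have "{t<..} \<union> {t} = {t..}" by auto
  ultimately show ?thesis
    using measure_exp_measure_greaterThan[OF e] by simp
qed

lemma measure_exp_measure_unit_window_le:
  assumes e: "0 < e"
  shows "measure (exp_measure e) {t..t+1} \<le> e * measure (exp_measure e) {t..}"
proof -
  interpret prob_space "exp_measure e"
    using e by (rule prob_space_exponential_density)
  define d where "d = max (t + 1) 0 - max t 0"
  have d: "0 \<le> d" "d \<le> 1" by (auto simp: d_def)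
  have "measure (exp_measure e) {t..t+1} = measure (exp_measure e) ({t..} - {t+1<..})"
    by (intro arg_cong[where f="measure _"]) auto
  also have "\<dots> = exp (- e * max t 0) - exp (- e * max (t + 1) 0)"
    using e by (subst finite_measure_Diff)
      (auto simp: measure_exp_measure_atLeast measure_exp_measure_greaterThan)
  also have "\<dots> = exp (- e * max t 0) * (1 - exp (- (e * d)))"
    by (simp add: d_def algebra_simps flip: exp_add)
  also have "\<dots> \<le> exp (- e * max t 0) * (e * d)"
    using exp_ge_add_one_self[of "- (e * d)"] by (intro mult_left_mono) auto
  also have "\<dots> \<le> exp (- e * max t 0) * e"
    using d e by (intro mult_left_mono) auto
  finally show ?thesis
    using measure_exp_measure_atLeast[OF e] by (simp add: mult.commute)
qed

lemma exp_measure_excess: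
  assumes e: "0 < e" and u: "0 \<le> u"
  shows "integrable (exp_measure e) (\<lambda>x. max (x - u) 0)"
    and "(\<integral>x. max (x - u) 0 \<partial>exp_measure e) = exp (- u * e) / e"
proof -
  interpret prob_space "exp_measure e"
    using e by (rule prob_space_exponential_density)
  note distr = distributed_exp_measure[OF e]
  have nonneg: "AE x in lborel. 0 \<le> exponential_density e x"
    using e by (auto simp: exponential_density_nonneg)
  have mean: "integrable lborel (\<lambda>x. exponential_density e x * x)"
    "(\<integral>x. exponential_density e x * x \<partial>lborel) = 1 / e"
    using erlang_ith_moment_integrable[OF e distr, of 1]
      exponential_distributed_expectation[OF e distr] nonneg
    by (simp_all add: integrable_density integral_density)
  text \<open>Memorylessness: for u \<ge> 0 the density at u + y is exp (- u * e) times the density at y.\<close>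
  have shift: "exponential_density e (u + 1 * y) *\<^sub>R max (u + 1 * y - u) 0
            = exp (- u * e) * (exponential_density e y * y)" for y
    using u e by (auto simp: exponential_density_def algebra_simps max_def simp flip: exp_add)
  have "integrable lborel (\<lambda>x. exponential_density e x *\<^sub>R max (x - u) 0)"
    using lborel_integrable_real_affine_iff[of 1 "\<lambda>x. exponential_density e x *\<^sub>R max (x - u) 0" u]
      mean(1) unfolding shift by simp
  then show "integrable (exp_measure e) (\<lambda>x. max (x - u) 0)"
    using nonneg by (subst integrable_density) auto
  have "(\<integral>x. max (x - u) 0 \<partial>exp_measure e)
      = (\<integral>x. exponential_density e x *\<^sub>R max (x - u) 0 \<partial>lborel)"
    using nonneg by (subst integral_density) auto
  also have "\<dots> = (\<integral>y. exp (- u * e) * (exponential_density e y * y) \<partial>lborel)"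
    using lborel_integral_real_affine[of 1 "\<lambda>x. exponential_density e x *\<^sub>R max (x - u) 0" u]
    unfolding shift by simp
  also have "\<dots> = exp (- u * e) / e"
    using mean(2) by simp
  finally show "(\<integral>x. max (x - u) 0 \<partial>exp_measure e) = exp (- u * e) / e" .
qed

section \<open>Independent exponential perturbations\<close>

abbreviation round_space :: "real \<Rightarrow> 'a set \<Rightarrow> ('a \<Rightarrow> real) measure" where
  "round_space e A \<equiv> PiM A (\<lambda>_. exp_measure e)"

lemma prob_space_round_space: "0 < e \<Longrightarrow> prob_space (round_space e A)"
  by (intro prob_space_PiM prob_space_exponential_density)

lemma product_sigma_finite_exp_measure: "0 < e \<Longrightarrow> product_sigma_finite (\<lambda>_. exp_measure e)"
  unfolding product_sigma_finite_def
  using prob_space_exponential_density prob_space_imp_sigma_finite by blast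

lemma borel_measurable_round_space_component:
  "a \<in> A \<Longrightarrow> (\<lambda>p. p a) \<in> borel_measurable (round_space e A)"
proof -
  have sets_exp: "sets (exp_measure e) = sets borel" by simp
  assume "a \<in> A"
  from measurable_component_singleton[OF this, of "\<lambda>_. exp_measure e"]
  show ?thesis by (simp add: measurable_cong_sets[OF refl sets_exp])
qed

lemma pred_round_space_compare:
  assumes a: "a \<in> A" and b: "b \<in> A"
  shows "Measurable.pred (round_space e A) (\<lambda>p. x - p a \<le> y - p b)"
    and "Measurable.pred (round_space e A) (\<lambda>p. x - p a < y - p b)"
proof -
  have "(\<lambda>p. x - p a) \<in> borel_measurable (round_space e A)"
    and "(\<lambda>p. y - p b) \<in> borel_measurable (round_space e A)"
    using a b by (auto intro: borel_measurable_diff borel_measurable_round_space_component)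
  then show "Measurable.pred (round_space e A) (\<lambda>p. x - p a \<le> y - p b)"
    and "Measurable.pred (round_space e A) (\<lambda>p. x - p a < y - p b)"
    unfolding pred_def by (rule borel_measurable_le borel_measurable_less)+
qed

lemma round_space_tie_null:
  assumes e: "0 < e" and A: "finite A" and a: "a \<in> A" and b: "b \<in> A" and ab: "a \<noteq> b"
  shows "AE p in round_space e A. p a \<noteq> p b + d"
proof -
  interpret product_sigma_finite "\<lambda>_. exp_measure e"
    using e by (rule product_sigma_finite_exp_measure)
  let ?S = "{p \<in> space (round_space e A). p a = p b + d}"
  have S: "?S \<in> sets (round_space e A)" using a b by measurable
  have A_eq: "insert a (A - {a}) = A" using a by auto
  text \<open>Integrate out the coordinate a first: for fixed other coordinates the event is a point.\<close>
  have "emeasure (round_space e A) ?S = (\<integral>\<^sup>+p. indicator ?S p \<partial>round_space e (insert a (A - {a})))"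
    using S by (simp only: A_eq) simp
  also have "\<dots> = (\<integral>\<^sup>+q. (\<integral>\<^sup>+x. indicator ?S (q(a := x)) \<partial>exp_measure e) \<partial>round_space e (A - {a}))"
    using A S by (intro product_nn_integral_insert) (simp_all only: A_eq, simp_all)
  also have "\<dots> = (\<integral>\<^sup>+q. (\<integral>\<^sup>+x. indicator {q b + d} x \<partial>exp_measure e) \<partial>round_space e (A - {a}))"
  proof (intro nn_integral_cong)
    fix q x assume "q \<in> space (round_space e (A - {a}))"
    then have "q(a := x) \<in> space (round_space e A)"
      using a by (auto simp: space_PiM PiE_iff extensional_def)
    then show "indicator ?S (q(a := x)) = (indicator {q b + d} x :: ennreal)"
      using ab by (auto simp: indicator_def)
  qed
  also have "\<dots> = 0"
    by (simp add: emeasure_density)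
  finally show ?thesis
    by (intro AE_I[of _ _ ?S]) (use S in auto)
qed

lemma AE_round_space_inj_on:
  assumes e: "0 < e" and A: "finite A"
  shows "AE p in round_space e A. inj_on (\<lambda>a. C a - p a) A"
proof -
  have "AE p in round_space e A. \<forall>(a, b)\<in>A \<times> A. a \<noteq> b \<longrightarrow> p a \<noteq> p b + (C a - C b)"
    using A by (intro AE_finite_allI) (auto intro: round_space_tie_null[OF e A])
  then show ?thesis
    by eventually_elim (force simp: inj_on_def)
qed

lemma AE_round_space_nonneg:
  assumes e: "0 < e" and A: "finite A"
  shows "AE p in round_space e A. \<forall>a\<in>A. 0 \<le> p a"
proof -
  have "AE x in exp_measure e. 0 \<le> x"
    by (subst AE_density) (auto simp: exponential_density_def intro!: AE_I2)
  then show ?thesis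
    using A by (intro AE_finite_allI AE_PiM_component prob_space_exponential_density e) auto
qed

lemma emeasure_round_space_unit_windows_le:
  assumes e: "0 < e" and S: "finite S"
  shows "emeasure (round_space e S) (PiE S (\<lambda>b. {h b .. h b + 1}))
         \<le> ennreal (e ^ card S) * emeasure (round_space e S) (PiE S (\<lambda>b. {h b ..}))"
proof -
  interpret product_sigma_finite "\<lambda>_. exp_measure e"
    using e by (rule product_sigma_finite_exp_measure)
  interpret finite_product_sigma_finite "\<lambda>_. exp_measure e" S
    by standard (rule S)
  interpret prob_space "exp_measure e"
    using e by (rule prob_space_exponential_density)
  have "emeasure (round_space e S) (PiE S (\<lambda>b. {h b .. h b + 1}))
        = ennreal (\<Prod>b\<in>S. measure (exp_measure e) {h b .. h b + 1})"
    by (simp add: measure_times emeasure_eq_measure prod_ennreal)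
  also have "\<dots> \<le> ennreal (\<Prod>b\<in>S. e * measure (exp_measure e) {h b ..})"
    using measure_exp_measure_unit_window_le[OF e] by (intro ennreal_leI prod_mono) auto
  also have "\<dots> = ennreal (e ^ card S) * ennreal (\<Prod>b\<in>S. measure (exp_measure e) {h b ..})"
    using e by (simp add: prod.distrib prod_nonneg flip: ennreal_mult)
  also have "ennreal (\<Prod>b\<in>S. measure (exp_measure e) {h b ..})
      = emeasure (round_space e S) (PiE S (\<lambda>b. {h b ..}))"
    by (simp add: measure_times emeasure_eq_measure prod_ennreal)
  finally show ?thesis .
qed

lemma sets_round_space_thresholds:
  assumes S: "finite S" "S \<subseteq> A"
    and h: "\<And>b. b \<in> S \<Longrightarrow> h b \<in> borel_measurable (round_space e A)"
  shows "{p \<in> space (round_space e A). \<forall>b\<in>S. p b \<in> {h b p .. h b p + 1}} \<in> sets (round_space e A)"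
    and "{p \<in> space (round_space e A). \<forall>b\<in>S. p b \<in> {h b p ..}} \<in> sets (round_space e A)"
proof -
  have "(\<lambda>p. p b) \<in> borel_measurable (round_space e A)" if "b \<in> S" for b
    using that S by (intro borel_measurable_round_space_component) auto
  then show "{p \<in> space (round_space e A). \<forall>b\<in>S. p b \<in> {h b p .. h b p + 1}}
      \<in> sets (round_space e A)"
    and "{p \<in> space (round_space e A). \<forall>b\<in>S. p b \<in> {h b p ..}} \<in> sets (round_space e A)"
    unfolding pred_def[symmetric] atLeastAtMost_iff atLeast_iff
    using S h by (auto intro!: pred_intros_finite pred_intros_logic
        borel_measurable_le[unfolded pred_def[symmetric]] borel_measurable_add)
qed

lemma vimage_merge_thresholds:
  assumes S: "S \<subseteq> A" and q: "q \<in> space (round_space e (A - S))"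
    and h_rest: "\<And>b p p'. b \<in> S \<Longrightarrow> (\<And>a. a \<in> A - S \<Longrightarrow> p a = p' a) \<Longrightarrow> h b p = h b p'"
  shows "(\<lambda>y. merge (A - S) S (q, y)) -` {p \<in> space (round_space e A). \<forall>b\<in>S. p b \<in> J (h b p)}
           \<inter> space (round_space e S) = PiE S (\<lambda>b. J (h b q))"
proof -
  have merge_rest: "h b (merge (A - S) S (q, y)) = h b q" if "b \<in> S" for b y
    using that by (intro h_rest) (auto simp: merge_def)
  have merge_S: "merge (A - S) S (q, y) b = y b" if "b \<in> S" for b y
    using that by (simp add: merge_def)
  have "merge (A - S) S (q, y) \<in> space (round_space e A)" if "y \<in> space (round_space e S)" for y
    using that q S by (auto simp: space_PiM PiE_iff extensional_def merge_def)
  then show ?thesis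
    by (auto simp: merge_rest merge_S space_PiM PiE_iff)
qed

lemma measure_round_space_windows_given_rest_le:
  assumes e: "0 < e" and A: "finite A" and S: "S \<subseteq> A"
    and h: "\<And>b. b \<in> S \<Longrightarrow> h b \<in> borel_measurable (round_space e A)"
    and h_rest: "\<And>b p p'. b \<in> S \<Longrightarrow> (\<And>a. a \<in> A - S \<Longrightarrow> p a = p' a) \<Longrightarrow> h b p = h b p'"
  shows "measure (round_space e A) {p \<in> space (round_space e A). \<forall>b\<in>S. p b \<in> {h b p .. h b p + 1}}
         \<le> e ^ card S
           * measure (round_space e A) {p \<in> space (round_space e A). \<forall>b\<in>S. p b \<in> {h b p ..}}"
proof -
  interpret product_sigma_finite "\<lambda>_. exp_measure e"
    using e by (rule product_sigma_finite_exp_measure)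
  interpret prob_space "round_space e A"
    using e by (rule prob_space_round_space)
  let ?W = "{p \<in> space (round_space e A). \<forall>b\<in>S. p b \<in> {h b p .. h b p + 1}}"
  let ?G = "{p \<in> space (round_space e A). \<forall>b\<in>S. p b \<in> {h b p ..}}"
  let ?slice = "\<lambda>q X. (\<lambda>y. merge (A - S) S (q, y)) -` X \<inter> space (round_space e S)"
  let ?N = "round_space e (A - S)"
  have fin: "finite S" "finite (A - S)" using A S finite_subset by auto
  have A_eq: "(A - S) \<union> S = A" using S by auto
  have W: "?W \<in> sets (round_space e (A - S \<union> S))" and G: "?G \<in> sets (round_space e (A - S \<union> S))"
    unfolding A_eq using sets_round_space_thresholds[OF fin(1) S h] by auto
  have slice_W: "?slice q ?W = PiE S (\<lambda>b. {h b q .. h b q + 1})" if "q \<in> space ?N" for q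
    using vimage_merge_thresholds[where h=h and J="\<lambda>t. {t .. t + 1}", OF S that h_rest] by simp
  have slice_G: "?slice q ?G = PiE S (\<lambda>b. {h b q ..})" if "q \<in> space ?N" for q
    using vimage_merge_thresholds[where h=h and J=atLeast, OF S that h_rest] by simp
  text \<open>Fubini over the coordinates outside S, which fix the thresholds.\<close>
  have "emeasure (round_space e A) ?W = emeasure (round_space e (A - S \<union> S)) ?W"
    by (simp only: A_eq)
  also have "\<dots> = (\<integral>\<^sup>+q. emeasure (round_space e S) (?slice q ?W) \<partial>?N)"
    using fin W by (intro emeasure_fold_integral) auto
  also have "\<dots> = (\<integral>\<^sup>+q. emeasure (round_space e S) (PiE S (\<lambda>b. {h b q .. h b q + 1})) \<partial>?N)"
    by (intro nn_integral_cong) (simp only: slice_W)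
  also have "\<dots> \<le> (\<integral>\<^sup>+q. ennreal (e ^ card S)
      * emeasure (round_space e S) (PiE S (\<lambda>b. {h b q ..})) \<partial>?N)"
    by (intro nn_integral_mono emeasure_round_space_unit_windows_le[OF e fin(1)])
  also have "\<dots> = ennreal (e ^ card S) * (\<integral>\<^sup>+q. emeasure (round_space e S) (?slice q ?G) \<partial>?N)"
    using fin G by (subst nn_integral_cmult[symmetric])
      (auto intro!: emeasure_fold_measurable nn_integral_cong simp only: slice_G)
  also have "(\<integral>\<^sup>+q. emeasure (round_space e S) (?slice q ?G) \<partial>?N) = emeasure (round_space e A) ?G"
    using fin G by (subst emeasure_fold_integral[symmetric]) (auto simp only: A_eq)
  finally show ?thesis
    using e by (simp add: emeasure_eq_measure ennreal_mult'[symmetric] ennreal_le_iff)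
qed

lemma Max_le_add_sum_excess:
  fixes p :: "'a \<Rightarrow> real"
  assumes "finite A" "A \<noteq> {}"
  shows "Max (p ` A) \<le> u + (\<Sum>a\<in>A. max (p a - u) 0)"
proof -
  have "Max (p ` A) \<in> p ` A" using assms by simp
  then obtain a where a: "a \<in> A" "Max (p ` A) = p a" by auto
  have "max (p a - u) 0 \<le> (\<Sum>a\<in>A. max (p a - u) 0)"
    using assms a by (intro member_le_sum) auto
  then show ?thesis using a by linarith
qed

lemma round_space_sum_excess:
  assumes e: "0 < e" and u: "0 \<le> u"
  shows "integrable (round_space e A) (\<lambda>p. \<Sum>a\<in>A. max (p a - u) 0)"
    and "(\<integral>p. (\<Sum>a\<in>A. max (p a - u) 0) \<partial>round_space e A) = card A * (exp (- u * e) / e)"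
proof -
  have excess: "integrable (round_space e A) (\<lambda>p. max (p a - u) 0)"
    "(\<integral>p. max (p a - u) 0 \<partial>round_space e A) = exp (- u * e) / e" if a: "a \<in> A" for a
  proof -
    have distr: "distr (round_space e A) (exp_measure e) (\<lambda>p. p a) = exp_measure e"
      using e a by (intro distr_PiM_component prob_space_exponential_density)
    have comp: "(\<lambda>p. p a) \<in> round_space e A \<rightarrow>\<^sub>M exp_measure e"
      using a by (rule measurable_component_singleton)
    show "integrable (round_space e A) (\<lambda>p. max (p a - u) 0)"
      using exp_measure_excess(1)[OF e u] integrable_distr_eq[OF comp, of "\<lambda>x. max (x - u) 0"]
      by (simp add: distr)
    show "(\<integral>p. max (p a - u) 0 \<partial>round_space e A) = exp (- u * e) / e"
      using exp_measure_excess(2)[OF e u] integral_distr[OF comp, of "\<lambda>x. max (x - u) 0"]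
      by (simp add: distr)
  qed
  show "integrable (round_space e A) (\<lambda>p. \<Sum>a\<in>A. max (p a - u) 0)"
    using excess(1) by (rule Bochner_Integration.integrable_sum)
  show "(\<integral>p. (\<Sum>a\<in>A. max (p a - u) 0) \<partial>round_space e A) = card A * (exp (- u * e) / e)"
    using excess by (simp add: Bochner_Integration.integral_sum)
qed

lemma round_space_expected_Max_le:
  assumes e: "0 < e" and A: "finite A" "A \<noteq> {}"
  shows "integrable (round_space e A) (\<lambda>p. Max (p ` A))"
    and "(\<integral>p. Max (p ` A) \<partial>round_space e A) \<le> (1 + ln (card A)) / e"
proof -
  interpret prob_space "round_space e A"
    using e by (rule prob_space_round_space)
  define N where "N = real (card A)"
  have N: "1 \<le> N" using A by (simp add: N_def Suc_le_eq card_gt_0_iff)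
  text \<open>This choice of u makes the expected total excess N exp (- u e) / e equal to 1 / e.\<close>
  define u where "u = ln N / e"
  have u: "0 \<le> u" using N e by (simp add: u_def)
  let ?bound = "\<lambda>p. u + (\<Sum>a\<in>A. max (p a - u) 0)"
  have bound: "integrable (round_space e A) ?bound"
    using round_space_sum_excess(1)[OF e u] by (intro Bochner_Integration.integrable_add) auto
  have Max_le: "AE p in round_space e A. Max (p ` A) \<le> ?bound p"
    using A by (intro AE_I2 Max_le_add_sum_excess)
  have Max_nonneg: "AE p in round_space e A. 0 \<le> Max (p ` A)"
    using AE_round_space_nonneg[OF e A(1)]
    by eventually_elim (use A in \<open>auto simp: Max_ge_iff\<close>)
  show Max: "integrable (round_space e A) (\<lambda>p. Max (p ` A))"
  proof (rule Bochner_Integration.integrable_bound[OF bound])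
    show "(\<lambda>p. Max (p ` A)) \<in> borel_measurable (round_space e A)"
      using A by (intro borel_measurable_Max borel_measurable_round_space_component)
    show "AE p in round_space e A. norm (Max (p ` A)) \<le> norm (?bound p)"
      using Max_le Max_nonneg by eventually_elim auto
  qed
  have "(\<integral>p. Max (p ` A) \<partial>round_space e A) \<le> (\<integral>p. ?bound p \<partial>round_space e A)"
    using Max bound Max_le by (rule integral_mono_AE)
  also have "\<dots> = u + N * (exp (- u * e) / e)"
    using round_space_sum_excess[OF e u, of A]
    by (simp add: Bochner_Integration.integral_add N_def prob_space)
  also have "\<dots> = (1 + ln N) / e"
    using N e by (simp add: u_def exp_minus add_divide_distrib)
  finally show "(\<integral>p. Max (p ` A) \<partial>round_space e A) \<le> (1 + ln (card A)) / e"
    by (simp add: N_def)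
qed

section \<open>Lowest sets and strict leaders\<close>

definition lowest :: "'a set \<Rightarrow> 'a set \<Rightarrow> ('a \<Rightarrow> 'b::linorder) \<Rightarrow> bool" where
  "lowest A S w \<longleftrightarrow> (\<forall>b\<in>S. \<forall>a\<in>A - S. w b \<le> w a)"

lemma lowest_unique:
  assumes A: "finite A" and w: "inj_on w A" and S: "S \<subseteq> A" "lowest A S w"
    and S': "S' \<subseteq> A" "lowest A S' w" and card: "card S' = card S"
  shows "S' = S"
proof (rule ccontr)
  assume "S' \<noteq> S"
  have fin: "finite S" "finite S'" using A S S' finite_subset by auto
  have "\<not> S \<subseteq> S'" "\<not> S' \<subseteq> S"
    using card_subset_eq[OF fin(2)] card_subset_eq[OF fin(1)] card \<open>S' \<noteq> S\<close> by auto
  then obtain x y where x: "x \<in> S" "x \<notin> S'" and y: "y \<in> S'" "y \<notin> S" by auto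
  have "w x \<le> w y" using S x y S' unfolding lowest_def by auto
  moreover have "w y \<le> w x" using S' x y S unfolding lowest_def by auto
  ultimately have "x = y" using w x y S S' by (auto dest: inj_onD)
  then show False using x y by simp
qed

lemma finite_subsets_card: "finite A \<Longrightarrow> finite {S. S \<subseteq> A \<and> card S = k}"
  by (rule finite_subset[of _ "Pow A"]) auto

lemma sum_lowest_eq:
  assumes A: "finite A" and w: "inj_on w A" and S: "S \<subseteq> A" "lowest A S w"
  shows "(\<Sum>S' | S' \<subseteq> A \<and> card S' = card S. if lowest A S' w then f S' else 0) = f S"
proof -
  have "(\<Sum>S' | S' \<subseteq> A \<and> card S' = card S. if lowest A S' w then f S' else 0)
      = (\<Sum>S' | S' \<subseteq> A \<and> card S' = card S. if S' = S then f S else 0)"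
  proof (intro sum.cong refl)
    fix S' assume "S' \<in> {S'. S' \<subseteq> A \<and> card S' = card S}"
    then have S': "S' \<subseteq> A" "card S' = card S" by auto
    show "(if lowest A S' w then f S' else 0) = (if S' = S then f S else 0)"
    proof (cases "lowest A S' w")
      case True
      then have "S' = S" by (rule lowest_unique[OF A w S S'(1) _ S'(2)])
      then show ?thesis using True by simp
    next
      case False
      then show ?thesis using S(2) by auto
    qed
  qed
  also have "\<dots> = f S"
    using S(1) by (simp only: sum.delta[OF finite_subsets_card[OF A]]) simp
  finally show ?thesis .
qed

text \<open>Both costs below are sums of indicator terms rather than values at a chosen minimiser:
  no tie-breaking rule is needed, and measurability in the perturbation is immediate.\<close>

definition lowest_cost :: "'a set \<Rightarrow> nat \<Rightarrow> ('a \<Rightarrow> real) \<Rightarrow> ('a \<Rightarrow> 'b::linorder) \<Rightarrow> real" where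
  "lowest_cost A k c w = (\<Sum>S | S \<subseteq> A \<and> card S = k. if lowest A S w then Min (c ` S) else 0)"

lemma lowest_cost_eq_Min:
  assumes "finite A" "inj_on w A" "S \<subseteq> A" "lowest A S w"
  shows "lowest_cost A (card S) c w = Min (c ` S)"
  unfolding lowest_cost_def using assms by (rule sum_lowest_eq)

lemma lowest_cost_cong:
  assumes "\<And>a. a \<in> A \<Longrightarrow> w a = w' a"
  shows "lowest_cost A k c w = lowest_cost A k c w'"
  unfolding lowest_cost_def lowest_def using assms by (intro sum.cong refl) (auto simp: subset_iff)

definition leader_cost :: "'a set \<Rightarrow> ('a \<Rightarrow> real) \<Rightarrow> ('a \<Rightarrow> 'b::linorder) \<Rightarrow> real" where
  "leader_cost A c w = (\<Sum>a\<in>A. if \<forall>b\<in>A - {a}. w a < w b then c a else 0)"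

lemma strict_minimiser_unique:
  fixes w :: "'a \<Rightarrow> 'b::linorder"
  assumes a: "a \<in> A" "\<forall>b\<in>A - {a}. w a < w b" and x: "x \<in> A" "\<forall>b\<in>A. w x \<le> w b"
  shows "x = a"
proof (rule ccontr)
  assume "x \<noteq> a"
  then have "w a < w x" using a x by auto
  moreover have "w x \<le> w a" using a x by auto
  ultimately show False by simp
qed

lemma leader_cost_eq:
  assumes "finite A" "a \<in> A" "\<forall>b\<in>A - {a}. w a < w b"
  shows "leader_cost A c w = c a"
proof -
  have "leader_cost A c w = (\<Sum>x\<in>A. if x = a then c a else 0)"
    unfolding leader_cost_def
  proof (intro sum.cong refl)
    fix x assume x: "x \<in> A"
    have "x = a" if x_strict: "\<forall>b\<in>A - {x}. w x < w b"
    proof (rule strict_minimiser_unique[OF assms(2,3) x])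
      show "\<forall>b\<in>A. w x \<le> w b"
        using x_strict by (auto simp: le_less)
    qed
    then show "(if \<forall>b\<in>A - {x}. w x < w b then c x else 0) = (if x = a then c a else 0)"
      using assms(3) by (cases "x = a") auto
  qed
  then show ?thesis using assms by simp
qed

lemma leader_cost_le:
  assumes A: "finite A" and c: "\<forall>x\<in>A. 0 \<le> c x" and a: "a \<in> A" "\<forall>b\<in>A. w a \<le> w b"
  shows "leader_cost A c w \<le> c a"
proof (cases "\<forall>b\<in>A - {a}. w a < w b")
  case True
  then show ?thesis using leader_cost_eq[OF A a(1) True] by simp
next
  case False
  have "\<not> (\<forall>b\<in>A - {x}. w x < w b)" if x: "x \<in> A" for x
  proof
    assume "\<forall>b\<in>A - {x}. w x < w b"
    with strict_minimiser_unique[OF x this a] False show False by simp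
  qed
  then have "leader_cost A c w = 0"
    unfolding leader_cost_def by (intro sum.neutral) auto
  then show ?thesis using a c by simp
qed

lemma leader_cost_nonneg: "\<forall>x\<in>A. 0 \<le> c x \<Longrightarrow> 0 \<le> leader_cost A c w"
  unfolding leader_cost_def by (intro sum_nonneg) auto

lemma be_the_leader:
  assumes A: "finite A" "A \<noteq> {}" and c: "\<And>t a. a \<in> A \<Longrightarrow> 0 \<le> c t a" and z: "z \<in> A"
  shows "(\<Sum>t<n. leader_cost A (c t) (\<lambda>a. cum_cost c (Suc t) a - p a))
         \<le> cum_cost c n z - p z + Max (p ` A)"
  using z
proof (induction n arbitrary: z)
  case 0
  then show ?case using A by (simp add: cum_cost_def)
next
  case (Suc n)
  define x where "x = arg_min_on (\<lambda>a. cum_cost c (Suc n) a - p a) A"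
  have x: "x \<in> A" "\<forall>b\<in>A. cum_cost c (Suc n) x - p x \<le> cum_cost c (Suc n) b - p b"
    unfolding x_def using A by (auto intro: arg_min_if_finite(1) arg_min_least)
  have "(\<Sum>t<Suc n. leader_cost A (c t) (\<lambda>a. cum_cost c (Suc t) a - p a))
      \<le> (cum_cost c n x - p x + Max (p ` A)) + c n x"
    using Suc.IH[OF x(1)] leader_cost_le[OF A(1) _ x] c by (simp add: add_mono)
  also have "\<dots> = cum_cost c (Suc n) x - p x + Max (p ` A)"
    by (simp add: cum_cost_def)
  also have "\<dots> \<le> cum_cost c (Suc n) z - p z + Max (p ` A)"
    using x Suc.prems by auto
  finally show ?case .
qed

lemma lowest_and_leading_cost_le:
  assumes A: "finite A" and w: "inj_on w A" and c: "\<forall>x\<in>A. 0 \<le> c x"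
  shows "(\<Sum>S | S \<subseteq> A \<and> card S = k.
            if lowest A S w \<and> (\<exists>a\<in>S. \<forall>b\<in>A - {a}. w' a < w' b) then Min (c ` S) else 0)
         \<le> leader_cost A c w'"
proof (cases "\<exists>S. S \<subseteq> A \<and> card S = k \<and> lowest A S w \<and> (\<exists>a\<in>S. \<forall>b\<in>A - {a}. w' a < w' b)")
  case False
  then show ?thesis
    using leader_cost_nonneg[OF c] by (subst sum.neutral) auto
next
  case True
  then obtain S a where S: "S \<subseteq> A" "card S = k" "lowest A S w"
    and a: "a \<in> S" "\<forall>b\<in>A - {a}. w' a < w' b" by blast
  let ?leads = "\<lambda>S'. \<exists>a\<in>S'. \<forall>b\<in>A - {a}. w' a < w' b"
  have "(\<Sum>S' | S' \<subseteq> A \<and> card S' = k. if lowest A S' w \<and> ?leads S' then Min (c ` S') else 0)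
      = (\<Sum>S' | S' \<subseteq> A \<and> card S' = card S.
            if lowest A S' w then (if ?leads S' then Min (c ` S') else 0) else 0)"
    using S(2) by (intro sum.cong) auto
  also have "\<dots> = (if ?leads S then Min (c ` S) else 0)"
    by (rule sum_lowest_eq[OF A w S(1,3)])
  also have "\<dots> = Min (c ` S)"
    using a by auto
  also have "\<dots> \<le> c a"
    using finite_subset[OF S(1) A] a by (intro Min_le) auto
  also have "\<dots> = leader_cost A c w'"
    using leader_cost_eq[OF A _ a(2)] a S by auto
  finally show ?thesis .
qed

text \<open>The value of p b at which arm b ties with the best arm outside S.\<close>

definition tie_threshold :: "'a set \<Rightarrow> 'a set \<Rightarrow> ('a \<Rightarrow> real) \<Rightarrow> ('a \<Rightarrow> real) \<Rightarrow> 'a \<Rightarrow> real" where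
  "tie_threshold A S C p b = C b - Min ((\<lambda>a. C a - p a) ` (A - S))"

lemma tie_threshold_cong:
  "(\<And>a. a \<in> A - S \<Longrightarrow> p a = p' a) \<Longrightarrow> tie_threshold A S C p b = tie_threshold A S C p' b"
  unfolding tie_threshold_def by (metis (no_types, lifting) image_cong)

lemma lowest_if_above_tie_thresholds:
  assumes fin: "finite (A - S)" and above: "\<forall>b\<in>S. tie_threshold A S C p b \<le> p b"
  shows "lowest A S (\<lambda>a. C a - p a)"
  unfolding lowest_def
proof (intro ballI)
  fix b a assume "b \<in> S" "a \<in> A - S"
  then have "C b - p b \<le> Min ((\<lambda>a. C a - p a) ` (A - S))"
    and "Min ((\<lambda>a. C a - p a) ` (A - S)) \<le> C a - p a"
    using above fin by (auto simp: tie_threshold_def intro: Min_le)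
  then show "C b - p b \<le> C a - p a" by linarith
qed

lemma lowest_not_leading_near_tie_threshold:
  fixes C c p :: "'a \<Rightarrow> real"
  assumes A: "finite A" and S: "S \<subseteq> A" and c: "\<forall>a\<in>A. 0 \<le> c a \<and> c a \<le> 1"
    and inj: "inj_on (\<lambda>a. C a + c a - p a) A" and low: "lowest A S (\<lambda>a. C a - p a)"
    and not_leading: "\<not> (\<exists>a\<in>S. \<forall>b\<in>A - {a}. C a + c a - p a < C b + c b - p b)"
    and b: "b \<in> S"
  shows "p b \<in> {tie_threshold A S C p b .. tie_threshold A S C p b + 1}"
proof -
  have "A \<noteq> {}" using S b by auto
  define x where "x = arg_min_on (\<lambda>a. C a + c a - p a) A"
  have x_min: "x \<in> A" "\<forall>a\<in>A. C x + c x - p x \<le> C a + c a - p a"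
    unfolding x_def using A \<open>A \<noteq> {}\<close> by (auto intro: arg_min_if_finite(1) arg_min_least)
  have "\<forall>a\<in>A - {x}. C x + c x - p x < C a + c a - p a"
    using x_min inj by (auto simp: inj_on_def order.order_iff_strict)
  then have x: "x \<in> A - S"
    using not_leading x_min(1) by auto
  have fin: "finite (A - S)" using A by simp
  have "C b - p b \<le> Min ((\<lambda>a. C a - p a) ` (A - S))"
    using fin x low b by (subst Min_ge_iff) (auto simp: lowest_def)
  moreover have "Min ((\<lambda>a. C a - p a) ` (A - S)) \<le> C x - p x"
    using fin x by (intro Min_le) auto
  moreover have "C x + c x - p x \<le> C b + c b - p b" "0 \<le> c x" "c b \<le> 1"
    using x_min c x b S by auto
  ultimately show ?thesis by (simp add: tie_threshold_def)
qed

section \<open>One round\<close>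

lemma pred_round_space_lowest:
  assumes "finite A" "S \<subseteq> A"
  shows "Measurable.pred (round_space e A) (\<lambda>p. lowest A S (\<lambda>a. C a - p a))"
  unfolding lowest_def using assms finite_subset
  by (intro pred_intros_finite pred_round_space_compare) auto

lemma pred_round_space_strict_min:
  assumes "finite A" "a \<in> A"
  shows "Measurable.pred (round_space e A) (\<lambda>p. \<forall>b\<in>A - {a}. C a - p a < C b - p b)"
  using assms by (intro pred_intros_finite pred_round_space_compare) auto

lemma borel_measurable_tie_threshold:
  assumes "finite A"
  shows "(\<lambda>p. tie_threshold A S C p b) \<in> borel_measurable (round_space e A)"
  unfolding tie_threshold_def using assms
  by (intro borel_measurable_diff borel_measurable_const borel_measurable_Min
      borel_measurable_round_space_component) auto

lemma measure_near_tie_thresholds_le: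
  assumes e: "0 < e" and A: "finite A" and S: "S \<subseteq> A"
  shows "measure (round_space e A)
           {p \<in> space (round_space e A).
              \<forall>b\<in>S. p b \<in> {tie_threshold A S C p b .. tie_threshold A S C p b + 1}}
         \<le> e ^ card S
           * measure (round_space e A) {p \<in> space (round_space e A). lowest A S (\<lambda>a. C a - p a)}"
proof -
  interpret prob_space "round_space e A"
    using e by (rule prob_space_round_space)
  have rest: "tie_threshold A S C p b = tie_threshold A S C p' b"
    if "b \<in> S" "\<And>a. a \<in> A - S \<Longrightarrow> p a = p' a" for b p p'
    using that(2) by (rule tie_threshold_cong)
  have "measure (round_space e A)
          {p \<in> space (round_space e A).
             \<forall>b\<in>S. p b \<in> {tie_threshold A S C p b .. tie_threshold A S C p b + 1}}
      \<le> e ^ card S * measure (round_space e A)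
          {p \<in> space (round_space e A). \<forall>b\<in>S. p b \<in> {tie_threshold A S C p b ..}}"
    by (rule measure_round_space_windows_given_rest_le
        [OF e A S borel_measurable_tie_threshold[OF A] rest])
  also have "\<dots> \<le> e ^ card S
      * measure (round_space e A) {p \<in> space (round_space e A). lowest A S (\<lambda>a. C a - p a)}"
    using lowest_if_above_tie_thresholds[of A S C] A e
      pred_round_space_lowest[OF A S, where e=e and C=C]
    by (intro mult_left_mono finite_measure_mono) (auto simp: pred_def)
  finally show ?thesis .
qed

lemma prob_lowest_and_leading_ge:
  assumes e: "0 < e" and A: "finite A" and S: "S \<subseteq> A"
    and c: "\<forall>a\<in>A. 0 \<le> c a \<and> c a \<le> 1"
  shows "(1 - e ^ card S)
           * measure (round_space e A) {p \<in> space (round_space e A). lowest A S (\<lambda>a. C a - p a)}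
         \<le> measure (round_space e A) {p \<in> space (round_space e A). lowest A S (\<lambda>a. C a - p a)
              \<and> (\<exists>a\<in>S. \<forall>b\<in>A - {a}. C a + c a - p a < C b + c b - p b)}"
proof -
  interpret prob_space "round_space e A"
    using e by (rule prob_space_round_space)
  let ?M = "round_space e A"
  define G where "G = {p \<in> space ?M. lowest A S (\<lambda>a. C a - p a)}"
  define L where "L = {p \<in> space ?M. lowest A S (\<lambda>a. C a - p a)
              \<and> (\<exists>a\<in>S. \<forall>b\<in>A - {a}. C a + c a - p a < C b + c b - p b)}"
  define W where
    "W = {p \<in> space ?M. \<forall>b\<in>S. p b \<in> {tie_threshold A S C p b .. tie_threshold A S C p b + 1}}"
  have fin: "finite S" using A S finite_subset by auto
  have W: "W \<in> sets ?M"
    unfolding W_def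
    using sets_round_space_thresholds(1)[OF fin S borel_measurable_tie_threshold[OF A]] .
  have G: "G \<in> sets ?M"
    unfolding G_def pred_def[symmetric] by (rule pred_round_space_lowest[OF A S])
  have L: "L \<in> sets ?M"
    unfolding L_def pred_def[symmetric] using A S fin
    by (intro pred_intros_logic pred_intros_finite pred_round_space_lowest
        pred_round_space_strict_min[where C="\<lambda>a. C a + c a"]) auto
  have "AE p in ?M. p \<in> G - L \<longrightarrow> p \<in> W"
    using AE_round_space_inj_on[OF e A, of "\<lambda>a. C a + c a"]
  proof eventually_elim
    case (elim p)
    show ?case
      using lowest_not_leading_near_tie_threshold[OF A S c elim] by (auto simp: G_def L_def W_def)
  qed
  then have "measure ?M (G - L) \<le> measure ?M W"
    using W by (intro finite_measure_mono_AE) auto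
  also have "\<dots> \<le> e ^ card S * measure ?M G"
    unfolding W_def G_def by (rule measure_near_tie_thresholds_le[OF e A S])
  finally have "measure ?M G - measure ?M L \<le> e ^ card S * measure ?M G"
    using G L by (subst (asm) finite_measure_Diff) (auto simp: L_def G_def)
  then show ?thesis
    by (simp add: G_def L_def algebra_simps)
qed

lemma integral_lowest_cost:
  assumes e: "0 < e" and A: "finite A"
  shows "integrable (round_space e A) (\<lambda>p. lowest_cost A k c (\<lambda>a. C a - p a))"
    and "(\<integral>p. lowest_cost A k c (\<lambda>a. C a - p a) \<partial>round_space e A)
         = (\<Sum>S | S \<subseteq> A \<and> card S = k.
              Min (c ` S)
            * measure (round_space e A) {p \<in> space (round_space e A). lowest A S (\<lambda>a. C a - p a)})"
proof -
  interpret prob_space "round_space e A"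
    using e by (rule prob_space_round_space)
  have fin: "finite {S. S \<subseteq> A \<and> card S = k}"
    by (rule finite_subsets_card[OF A])
  have lowest: "Measurable.pred (round_space e A) (\<lambda>p. lowest A S (\<lambda>a. C a - p a))"
    if "S \<in> {S. S \<subseteq> A \<and> card S = k}" for S
    using A that by (intro pred_round_space_lowest) auto
  show "integrable (round_space e A) (\<lambda>p. lowest_cost A k c (\<lambda>a. C a - p a))"
    unfolding lowest_cost_def by (rule integral_sum_if(1)[OF fin lowest])
  show "(\<integral>p. lowest_cost A k c (\<lambda>a. C a - p a) \<partial>round_space e A)
      = (\<Sum>S | S \<subseteq> A \<and> card S = k.
           Min (c ` S)
           * measure (round_space e A) {p \<in> space (round_space e A). lowest A S (\<lambda>a. C a - p a)})"
    unfolding lowest_cost_def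
    using integral_sum_if(2)[OF fin lowest, where k="\<lambda>S. Min (c ` S)"] by simp
qed

lemma integrable_leader_cost:
  assumes e: "0 < e" and A: "finite A"
  shows "integrable (round_space e A) (\<lambda>p. leader_cost A c (\<lambda>a. C a - p a))"
proof -
  interpret prob_space "round_space e A"
    using e by (rule prob_space_round_space)
  show ?thesis
    unfolding leader_cost_def
    using A by (intro integral_sum_if(1) pred_round_space_strict_min)
qed

lemma sum_prob_lowest_and_leading_le:
  assumes e: "0 < e" and A: "finite A" and c: "\<forall>a\<in>A. 0 \<le> c a"
  shows "(\<Sum>S | S \<subseteq> A \<and> card S = k. Min (c ` S) * measure (round_space e A)
            {p \<in> space (round_space e A). lowest A S (\<lambda>a. C a - p a)
               \<and> (\<exists>a\<in>S. \<forall>b\<in>A - {a}. D a - p a < D b - p b)})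
         \<le> (\<integral>p. leader_cost A c (\<lambda>a. D a - p a) \<partial>round_space e A)"
proof -
  interpret prob_space "round_space e A"
    using e by (rule prob_space_round_space)
  let ?M = "round_space e A" and ?subsets = "{S. S \<subseteq> A \<and> card S = k}"
  let ?event = "\<lambda>S p. lowest A S (\<lambda>a. C a - p a) \<and> (\<exists>a\<in>S. \<forall>b\<in>A - {a}. D a - p a < D b - p b)"
  have fin: "finite ?subsets" by (rule finite_subsets_card[OF A])
  have event: "Measurable.pred ?M (?event S)" if "S \<in> ?subsets" for S
    using that A finite_subset
    by (intro pred_intros_logic pred_intros_finite pred_round_space_lowest
        pred_round_space_strict_min) auto
  have "(\<Sum>S\<in>?subsets. Min (c ` S) * measure ?M {p \<in> space ?M. ?event S p})
      = (\<integral>p. (\<Sum>S\<in>?subsets. if ?event S p then Min (c ` S) else 0) \<partial>?M)"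
    by (rule integral_sum_if(2)[OF fin event, symmetric])
  also have "\<dots> \<le> (\<integral>p. leader_cost A c (\<lambda>a. D a - p a) \<partial>?M)"
  proof (rule integral_mono_AE)
    show "integrable ?M (\<lambda>p. \<Sum>S\<in>?subsets. if ?event S p then Min (c ` S) else 0)"
      by (rule integral_sum_if(1)[OF fin event])
    show "integrable ?M (\<lambda>p. leader_cost A c (\<lambda>a. D a - p a))"
      by (rule integrable_leader_cost[OF e A])
    show "AE p in ?M. (\<Sum>S\<in>?subsets. if ?event S p then Min (c ` S) else 0)
        \<le> leader_cost A c (\<lambda>a. D a - p a)"
      using AE_round_space_inj_on[OF e A, of C]
      by eventually_elim (use A c in \<open>auto intro!: lowest_and_leading_cost_le\<close>)
  qed
  finally show ?thesis .
qed

lemma expected_lowest_cost_le_leader_cost: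
  assumes e: "0 < e" and A: "finite A" and c: "\<forall>a\<in>A. 0 \<le> c a \<and> c a \<le> 1"
  shows "(1 - e ^ k) * (\<integral>p. lowest_cost A k c (\<lambda>a. C a - p a) \<partial>round_space e A)
         \<le> (\<integral>p. leader_cost A c (\<lambda>a. C a + c a - p a) \<partial>round_space e A)"
proof -
  let ?M = "round_space e A" and ?subsets = "{S. S \<subseteq> A \<and> card S = k}"
  let ?lowest = "\<lambda>S p. lowest A S (\<lambda>a. C a - p a)"
  let ?leads = "\<lambda>S p. \<exists>a\<in>S. \<forall>b\<in>A - {a}. C a + c a - p a < C b + c b - p b"
  have "(1 - e ^ k) * (\<integral>p. lowest_cost A k c (\<lambda>a. C a - p a) \<partial>?M)
      = (\<Sum>S\<in>?subsets. Min (c ` S) * ((1 - e ^ k) * measure ?M {p \<in> space ?M. ?lowest S p}))"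
    unfolding integral_lowest_cost(2)[OF e A] by (simp add: sum_distrib_left algebra_simps)
  also have "\<dots> \<le> (\<Sum>S\<in>?subsets. Min (c ` S) * measure ?M {p \<in> space ?M. ?lowest S p \<and> ?leads S p})"
  proof (intro sum_mono)
    fix S assume S: "S \<in> ?subsets"
    show "Min (c ` S) * ((1 - e ^ k) * measure ?M {p \<in> space ?M. ?lowest S p})
        \<le> Min (c ` S) * measure ?M {p \<in> space ?M. ?lowest S p \<and> ?leads S p}"
    proof (cases "S = {}")
      case False
      then have "0 \<le> Min (c ` S)"
        using S A c finite_subset[of S A] by (subst Min_ge_iff) auto
      then show ?thesis
        using prob_lowest_and_leading_ge[OF e A _ c] S by (intro mult_left_mono) auto
    qed (use S in simp)
  qed
  also have "\<dots> \<le> (\<integral>p. leader_cost A c (\<lambda>a. C a + c a - p a) \<partial>?M)"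
    using c by (intro sum_prob_lowest_and_leading_le[OF e A]) auto
  finally show ?thesis .
qed

section \<open>The regret of FPML\<close>

lemma expected_leader_costs_le:
  assumes e: "0 < e" and A: "finite A" "A \<noteq> {}" and c: "valid_costs A c"
  shows "(\<Sum>t<T. \<integral>p. leader_cost A (c t) (\<lambda>a. cum_cost c (Suc t) a - p a) \<partial>round_space e A)
         \<le> best_arm_cost A c T + (1 + ln (card A)) / e"
proof -
  interpret prob_space "round_space e A"
    using e by (rule prob_space_round_space)
  let ?M = "round_space e A"
  let ?leaders = "\<lambda>p. \<Sum>t<T. leader_cost A (c t) (\<lambda>a. cum_cost c (Suc t) a - p a)"
  obtain z where z: "z \<in> A" "best_arm_cost A c T = cum_cost c T z"
  proof -
    have "best_arm_cost A c T \<in> (\<lambda>a. cum_cost c T a) ` A"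
      using A unfolding best_arm_cost_def cum_cost_def by (intro Min_in) auto
    then show ?thesis using that by blast
  qed
  have "(\<Sum>t<T. \<integral>p. leader_cost A (c t) (\<lambda>a. cum_cost c (Suc t) a - p a) \<partial>?M) = (\<integral>p. ?leaders p \<partial>?M)"
    using integrable_leader_cost[OF e A(1)] by (simp add: Bochner_Integration.integral_sum)
  also have "\<dots> \<le> (\<integral>p. best_arm_cost A c T + Max (p ` A) \<partial>?M)"
  proof (rule integral_mono_AE)
    show "integrable ?M ?leaders"
      using integrable_leader_cost[OF e A(1)] by (rule Bochner_Integration.integrable_sum)
    show "integrable ?M (\<lambda>p. best_arm_cost A c T + Max (p ` A))"
      using round_space_expected_Max_le(1)[OF e A] by simp
    show "AE p in ?M. ?leaders p \<le> best_arm_cost A c T + Max (p ` A)"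
      using AE_round_space_nonneg[OF e A(1)]
    proof eventually_elim
      case (elim p)
      have "?leaders p \<le> cum_cost c T z - p z + Max (p ` A)"
        using c z(1) by (intro be_the_leader[OF A]) (auto simp: valid_costs_def)
      then show ?case using elim z by auto
    qed
  qed
  also have "\<dots> \<le> best_arm_cost A c T + (1 + ln (card A)) / e"
    using round_space_expected_Max_le[OF e A] by (simp add: prob_space)
  finally show ?thesis .
qed

lemma expected_lowest_costs_le:
  assumes e: "0 < e" and A: "finite A" "A \<noteq> {}" and c: "valid_costs A c"
  shows "(1 - e ^ k) * (\<Sum>t<T. \<integral>p. lowest_cost A k (c t) (\<lambda>a. cum_cost c t a - p a) \<partial>round_space e A)
         \<le> best_arm_cost A c T + (1 + ln (card A)) / e"
proof -
  have "(1 - e ^ k) * (\<integral>p. lowest_cost A k (c t) (\<lambda>a. cum_cost c t a - p a) \<partial>round_space e A)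
      \<le> (\<integral>p. leader_cost A (c t) (\<lambda>a. cum_cost c (Suc t) a - p a) \<partial>round_space e A)" for t
  proof -
    have "\<forall>a\<in>A. 0 \<le> c t a \<and> c t a \<le> 1"
      using c by (simp add: valid_costs_def)
    from expected_lowest_cost_le_leader_cost[OF e A(1) this, where k=k and C="cum_cost c t"]
    show ?thesis by (simp add: cum_cost_def)
  qed
  then have "(1 - e ^ k)
        * (\<Sum>t<T. \<integral>p. lowest_cost A k (c t) (\<lambda>a. cum_cost c t a - p a) \<partial>round_space e A)
      \<le> (\<Sum>t<T. \<integral>p. leader_cost A (c t) (\<lambda>a. cum_cost c (Suc t) a - p a) \<partial>round_space e A)"
    unfolding sum_distrib_left by (rule sum_mono)
  also have "\<dots> \<le> best_arm_cost A c T + (1 + ln (card A)) / e"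
    by (rule expected_leader_costs_le[OF e A c])
  finally show ?thesis .
qed

abbreviation game_space :: "real \<Rightarrow> nat \<Rightarrow> 'a set \<Rightarrow> ((nat \<times> 'a) \<Rightarrow> real) measure" where
  "game_space e T A \<equiv> PiM ({..<T} \<times> A) (\<lambda>_. exp_measure e)"

lemma measurable_round_of_game:
  "t < T \<Longrightarrow> (\<lambda>\<omega>. \<lambda>a\<in>A. \<omega> (t, a)) \<in> game_space e T A \<rightarrow>\<^sub>M round_space e A"
  by (intro measurable_restrict measurable_component_singleton) auto

lemma distr_round_of_game:
  assumes e: "0 < e" and t: "t < T"
  shows "distr (game_space e T A) (round_space e A) (\<lambda>\<omega>. \<lambda>a\<in>A. \<omega> (t, a)) = round_space e A"
  using distr_PiM_reindex[of "{..<T} \<times> A" "\<lambda>_. exp_measure e" "\<lambda>a. (t, a)" A]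
    prob_space_exponential_density[OF e] t
  by (auto simp: inj_on_def)

lemma integral_round_of_game:
  fixes f :: "('a \<Rightarrow> real) \<Rightarrow> real"
  assumes e: "0 < e" and t: "t < T" and f: "integrable (round_space e A) f"
  shows "integrable (game_space e T A) (\<lambda>\<omega>. f (\<lambda>a\<in>A. \<omega> (t, a)))"
    and "(\<integral>\<omega>. f (\<lambda>a\<in>A. \<omega> (t, a)) \<partial>game_space e T A) = (\<integral>p. f p \<partial>round_space e A)"
proof -
  note proj = measurable_round_of_game[OF t, where A=A and e=e]
  have f_meas: "f \<in> borel_measurable (round_space e A)"
    using f by (rule borel_measurable_integrable)
  show "integrable (game_space e T A) (\<lambda>\<omega>. f (\<lambda>a\<in>A. \<omega> (t, a)))"
    using f integrable_distr_eq[OF proj f_meas] by (simp add: distr_round_of_game[OF e t])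
  show "(\<integral>\<omega>. f (\<lambda>a\<in>A. \<omega> (t, a)) \<partial>game_space e T A) = (\<integral>p. f p \<partial>round_space e A)"
    using integral_distr[OF proj f_meas] by (simp add: distr_round_of_game[OF e t])
qed

lemma AE_game_space_inj_on:
  assumes e: "0 < e" and A: "finite A"
  shows "AE \<omega> in game_space e T A. \<forall>t\<in>{..<T}. inj_on (\<lambda>a. cum_cost c t a - \<omega> (t, a)) A"
proof (rule AE_finite_allI)
  fix t assume "t \<in> {..<T}"
  then have t: "t < T" by simp
  have "AE p in distr (game_space e T A) (round_space e A) (\<lambda>\<omega>. \<lambda>a\<in>A. \<omega> (t, a)).
          inj_on (\<lambda>a. cum_cost c t a - p a) A"
    unfolding distr_round_of_game[OF e t] by (rule AE_round_space_inj_on[OF e A])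
  from AE_distrD[OF measurable_round_of_game[OF t] this]
  show "AE \<omega> in game_space e T A. inj_on (\<lambda>a. cum_cost c t a - \<omega> (t, a)) A"
    by eventually_elim (simp add: inj_on_def)
qed simp

lemma fpml_cost_eq_sum_lowest_cost:
  assumes A: "finite A" and sel: "valid_tiebreak A B sel"
    and inj: "\<forall>t\<in>{..<T}. inj_on (\<lambda>a. cum_cost c t a - \<omega> (t, a)) A"
  shows "fpml_cost sel c T \<omega> = (\<Sum>t<T. lowest_cost A B (c t) (\<lambda>a. cum_cost c t a - \<omega> (t, a)))"
  unfolding fpml_cost_def
proof (intro sum.cong refl)
  fix t assume t: "t \<in> {..<T}"
  let ?v = "\<lambda>a. cum_cost c t a - \<omega> (t, a)"
  have S: "sel t ?v \<subseteq> A" "card (sel t ?v) = B" "lowest A (sel t ?v) ?v"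
    using spec[OF spec[OF sel[unfolded valid_tiebreak_def], of t], of ?v]
    by (auto simp: lowest_def)
  show "Min (c t ` fpml_set sel c \<omega> t) = lowest_cost A B (c t) ?v"
    using lowest_cost_eq_Min[OF A inj[rule_format, OF t] S(1,3)] S(2)
    by (simp add: fpml_set_def)
qed

lemma integral_fpml_cost:
  assumes e: "0 < e" and A: "finite A" and sel: "valid_tiebreak A B sel"
  shows "integrable (fpml_space e T A) (fpml_cost sel c T)"
    and "(\<integral>\<omega>. fpml_cost sel c T \<omega> \<partial>fpml_space e T A)
         = (\<Sum>t<T. \<integral>p. lowest_cost A B (c t) (\<lambda>a. cum_cost c t a - p a) \<partial>round_space e A)"
proof -
  let ?M = "game_space e T A"
  let ?H = "\<lambda>\<omega>. \<Sum>t<T. lowest_cost A B (c t) (\<lambda>a. cum_cost c t a - \<omega> (t, a))"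
  have restrict_eq: "lowest_cost A B (c t) (\<lambda>a. cum_cost c t a - (\<lambda>a\<in>A. \<omega> (t, a)) a)
      = lowest_cost A B (c t) (\<lambda>a. cum_cost c t a - \<omega> (t, a))" for t \<omega>
    by (rule lowest_cost_cong) simp
  have round: "integrable ?M (\<lambda>\<omega>. lowest_cost A B (c t) (\<lambda>a. cum_cost c t a - \<omega> (t, a)))"
    "(\<integral>\<omega>. lowest_cost A B (c t) (\<lambda>a. cum_cost c t a - \<omega> (t, a)) \<partial>?M)
       = (\<integral>p. lowest_cost A B (c t) (\<lambda>a. cum_cost c t a - p a) \<partial>round_space e A)"
    if "t < T" for t
    using integral_round_of_game
        [OF e that integral_lowest_cost(1)[OF e A, where k=B and c="c t" and C="cum_cost c t"]]
    unfolding restrict_eq by auto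
  have H: "integrable ?M ?H"
    using round(1) by (intro Bochner_Integration.integrable_sum) auto
  have eq: "AE \<omega> in ?M. fpml_cost sel c T \<omega> = ?H \<omega>"
    using AE_game_space_inj_on[OF e A, of T c]
    by eventually_elim (rule fpml_cost_eq_sum_lowest_cost[OF A sel])
  show "integrable (fpml_space e T A) (fpml_cost sel c T)"
    unfolding fpml_space_def by (rule integral_completion_AE_eq(1)[OF H eq])
  have "(\<integral>\<omega>. fpml_cost sel c T \<omega> \<partial>fpml_space e T A) = (\<integral>\<omega>. ?H \<omega> \<partial>?M)"
    unfolding fpml_space_def by (rule integral_completion_AE_eq(2)[OF H eq])
  also have "\<dots> = (\<Sum>t<T. \<integral>p. lowest_cost A B (c t) (\<lambda>a. cum_cost c t a - p a) \<partial>round_space e A)"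
    using round by (simp add: Bochner_Integration.integral_sum)
  finally show "(\<integral>\<omega>. fpml_cost sel c T \<omega> \<partial>fpml_space e T A)
      = (\<Sum>t<T. \<integral>p. lowest_cost A B (c t) (\<lambda>a. cum_cost c t a - p a) \<partial>round_space e A)" .
qed

lemma fpml_cost_le:
  assumes A: "finite A" and B: "1 \<le> B" and sel: "valid_tiebreak A B sel" and c: "valid_costs A c"
  shows "fpml_cost sel c T \<omega> \<le> T"
proof -
  have "Min (c t ` fpml_set sel c \<omega> t) \<le> 1" for t
  proof -
    let ?S = "fpml_set sel c \<omega> t"
    have S: "?S \<subseteq> A" "card ?S = B"
      using sel unfolding valid_tiebreak_def fpml_set_def by blast+
    then have "?S \<noteq> {}" using B by auto
    then obtain a where a: "a \<in> ?S" by blast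
    have "Min (c t ` ?S) \<le> c t a"
      using finite_subset[OF S(1) A] a by (intro Min_le) auto
    also have "\<dots> \<le> 1"
      using c a S(1) by (auto simp: valid_costs_def)
    finally show ?thesis .
  qed
  then have "fpml_cost sel c T \<omega> \<le> (\<Sum>t<T. 1)"
    unfolding fpml_cost_def by (intro sum_mono) auto
  then show ?thesis by simp
qed

lemma fpml_scaled_regret_le:
  assumes e: "0 < e" and A: "finite A" "A \<noteq> {}" and sel: "valid_tiebreak A B sel"
    and c: "valid_costs A c"
  shows "(\<integral>\<omega>. (1 - e ^ B) * fpml_cost sel c T \<omega> - best_arm_cost A c T \<partial>fpml_space e T A)
         \<le> (1 + ln (card A)) / e"
proof -
  interpret prob_space "fpml_space e T A"
    unfolding fpml_space_def using e
    by (intro prob_space.prob_space_completion prob_space_PiM prob_space_exponential_density)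
  have "(\<integral>\<omega>. (1 - e ^ B) * fpml_cost sel c T \<omega> - best_arm_cost A c T \<partial>fpml_space e T A)
      = (1 - e ^ B) * (\<Sum>t<T. \<integral>p. lowest_cost A B (c t) (\<lambda>a. cum_cost c t a - p a) \<partial>round_space e A)
        - best_arm_cost A c T"
    using integral_fpml_cost[OF e A(1) sel] by (simp add: prob_space)
  also have "\<dots> \<le> (1 + ln (card A)) / e"
    using expected_lowest_costs_le[OF e A c, of B T] by simp
  finally show ?thesis .
qed

lemma fpml_regret_le:
  assumes e: "0 < e" and A: "finite A" "A \<noteq> {}" and B: "1 \<le> B" and sel: "valid_tiebreak A B sel"
    and c: "valid_costs A c"
  shows "(\<integral>\<omega>. fpml_cost sel c T \<omega> - best_arm_cost A c T \<partial>fpml_space e T A)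
         \<le> (1 + ln (card A)) / e + e ^ B * T"
proof -
  interpret prob_space "fpml_space e T A"
    unfolding fpml_space_def using e
    by (intro prob_space.prob_space_completion prob_space_PiM prob_space_exponential_density)
  note F = integral_fpml_cost(1)[OF e A(1) sel, of T c]
  have "(\<integral>\<omega>. fpml_cost sel c T \<omega> \<partial>fpml_space e T A) \<le> T"
    using F fpml_cost_le[OF A(1) B sel c] integral_mono[OF F, of "\<lambda>_. real T"]
    by (simp add: prob_space)
  then have "e ^ B * (\<integral>\<omega>. fpml_cost sel c T \<omega> \<partial>fpml_space e T A) \<le> e ^ B * T"
    using e by (intro mult_left_mono) auto
  moreover have "(\<integral>\<omega>. fpml_cost sel c T \<omega> - best_arm_cost A c T \<partial>fpml_space e T A)
      = (\<integral>\<omega>. (1 - e ^ B) * fpml_cost sel c T \<omega> - best_arm_cost A c T \<partial>fpml_space e T A)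
        + e ^ B * (\<integral>\<omega>. fpml_cost sel c T \<omega> \<partial>fpml_space e T A)"
    using F by (simp add: prob_space algebra_simps)
  ultimately show ?thesis
    using fpml_scaled_regret_le[OF e A sel c, of T] by linarith
qed

lemma balanced_powr_sum:
  fixes L T :: real and B :: nat
  assumes L: "0 < L" and T: "0 < T"
  defines "e \<equiv> (L / T) powr (1 / (real B + 1))"
  shows "L / e + e ^ B * T = 2 * T powr (1 / (real B + 1)) * L powr (real B / (real B + 1))"
proof -
  define r s where "r = 1 / (real B + 1)" and "s = real B / (real B + 1)"
  have rs: "r + s = 1" by (simp add: r_def s_def field_simps)
  have e_pow: "e ^ B = L powr s / T powr s"
    using L T by (simp add: e_def r_def s_def powr_divide powr_powr flip: powr_realpow)
  have split: "x = x powr r * x powr s" if "0 < x" for x :: real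
    using that by (simp flip: powr_add add: rs)
  have e_eq: "e = L powr r / T powr r"
    using L T by (simp add: e_def r_def powr_divide)
  have "L / e = (L powr r * L powr s) * T powr r / L powr r"
    using L T by (simp add: e_eq flip: split[OF L])
  also have "\<dots> = L powr s * T powr r"
    using L by simp
  finally have "L / e = L powr s * T powr r" .
  moreover have "e ^ B * T = L powr s * T powr r"
    using T split[OF T] by (simp add: e_pow field_simps)
  ultimately show ?thesis by (simp add: r_def s_def)
qed

theorem theorem2:
  fixes A :: "'a set" and B :: nat
    and sel :: "nat \<Rightarrow> ('a \<Rightarrow> real) \<Rightarrow> 'a set"
  assumes "finite A" and "1 \<le> B" and "B \<le> card A"
    and "valid_tiebreak A B sel"
  shows "(\<forall>eps T c. eps > 0 \<longrightarrow> valid_costs A c \<longrightarrow>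
            (\<integral>\<omega>. (1 - eps ^ B) * fpml_cost sel c T \<omega> - best_arm_cost A c T
               \<partial>fpml_space eps T A)
            \<le> (1 + ln (real (card A))) / eps)
       \<and> (\<forall>T c. T \<ge> 1 \<longrightarrow> valid_costs A c \<longrightarrow>
            (let eps = ((ln (real (card A)) + 1) / real T) powr (1 / (real B + 1)) in
             (\<integral>\<omega>. fpml_cost sel c T \<omega> - best_arm_cost A c T \<partial>fpml_space eps T A)
             \<le> 2 * real T powr (1 / (real B + 1))
                  * (1 + ln (real (card A))) powr (real B / (real B + 1))))"
proof (intro conjI allI impI)
  have A: "finite A" "A \<noteq> {}" using assms by auto
  fix c assume c: "valid_costs A c"
  show "(\<integral>\<omega>. (1 - eps ^ B) * fpml_cost sel c T \<omega> - best_arm_cost A c T \<partial>fpml_space eps T A)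
        \<le> (1 + ln (real (card A))) / eps" if "eps > 0" for eps T
    using fpml_scaled_regret_le[OF that A assms(4) c] .
  fix T :: nat assume T: "T \<ge> 1"
  define L where "L = 1 + ln (real (card A))"
  have "1 \<le> real (card A)" using A by (simp add: Suc_le_eq card_gt_0_iff)
  then have L: "0 < L" by (simp add: L_def add_pos_nonneg)
  define eps where "eps = (L / T) powr (1 / (real B + 1))"
  have "(\<integral>\<omega>. fpml_cost sel c T \<omega> - best_arm_cost A c T \<partial>fpml_space eps T A) \<le> L / eps + eps ^ B * T"
    using fpml_regret_le[OF _ A assms(2,4) c] L T by (simp add: eps_def L_def)
  also have "\<dots> = 2 * real T powr (1 / (real B + 1)) * L powr (real B / (real B + 1))"
    unfolding eps_def using L T by (intro balanced_powr_sum) auto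
  finally show "let eps = ((ln (real (card A)) + 1) / real T) powr (1 / (real B + 1)) in
      (\<integral>\<omega>. fpml_cost sel c T \<omega> - best_arm_cost A c T \<partial>fpml_space eps T A)
      \<le> 2 * real T powr (1 / (real B + 1)) * (1 + ln (real (card A))) powr (real B / (real B + 1))"
    by (simp add: eps_def L_def add.commute)
qed

end
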